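(* Let $K$ be a field. (i) If $\alpha=\beta+1$ is a countable non-limit ordinal, then there is a $K$-algebra isomorphism $B_{\alpha,1}\cong B_{\beta,1}\boxplus B_{\alpha,1}$. (ii) If $\gamma\ge0$ is a countable ordinal and $\alpha=\gamma+n$ for some $0<n<\omega$, then there is a $K$-algebra isomorphism $B_{\alpha,1}\cong B_{\gamma,1}\boxplus B_{\alpha,1}$. (iii) If $\alpha$ is a countable limit ordinal and $\beta<\alpha$, then there is a $K$-algebra isomorphism $B_{\alpha,1}\cong B_{\beta,1}\boxplus B_{\alpha,1}$.
   Context: For a sequence $\mathcal R=(R_i\mid i\in A)$ of $K$-algebras indexed by an infinite set $A$, $R(A,K,\mathcal R)$ is the $K$-subalgebra $\bigoplus_{i\in A}R_i\oplus1_P\cdot K$ of $P=\prod_{i\in A}R_i$; $\boxplus$ is ring direct product. Define $B_{0,1}=K$; $B_{\beta+1,1}=R(\aleph_0,K,\mathcal R)$ with $\mathcal R$ the constant sequence $R_m=B_{\beta,1}$ ($m<\aleph_0$); for limit $\alpha$, $B_{\alpha,1}=R(\alpha,K,(B_{\beta,1}\mid\beta<\alpha))$. *)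

theory Defs
  imports "HOL-Algebra.Algebra"
begin

(* Ordinals are represented as elements of an arbitrary well-ordered type 'o.
   An element alpha is an ordinal via the order type of {beta. beta < alpha}. *)

definition is_zero_ord :: "'o::wellorder \<Rightarrow> bool" where
  "is_zero_ord \<alpha> \<longleftrightarrow> (\<forall>\<beta>. \<not> \<beta> < \<alpha>)"

definition is_succ_of :: "'o::wellorder \<Rightarrow> 'o \<Rightarrow> bool" where
  "is_succ_of \<alpha> \<beta> \<longleftrightarrow> \<beta> < \<alpha> \<and> (\<forall>\<gamma>. \<beta> < \<gamma> \<longrightarrow> \<alpha> \<le> \<gamma>)"

definition is_limit_ord :: "'o::wellorder \<Rightarrow> bool" where
  "is_limit_ord \<alpha> \<longleftrightarrow> (\<exists>\<beta>. \<beta> < \<alpha>) \<and> (\<forall>\<beta>. \<not> is_succ_of \<alpha> \<beta>)"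

definition countable_ord :: "'o::wellorder \<Rightarrow> bool" where
  "countable_ord \<alpha> \<longleftrightarrow> countable {\<beta>. \<beta> < \<alpha>}"

inductive plus_nat_ord :: "'o::wellorder \<Rightarrow> nat \<Rightarrow> 'o \<Rightarrow> bool" where
  "plus_nat_ord \<gamma> 0 \<gamma>"
| "plus_nat_ord \<gamma> n \<delta> \<Longrightarrow> is_succ_of \<alpha> \<delta> \<Longrightarrow> plus_nat_ord \<gamma> (Suc n) \<alpha>"

(* The algebra B_{alpha,1} is realised inside K^(X_alpha) with pointwise operations,
   where X_0 = {[]}, X_{beta+1} = nat \<times> X_beta (coded as Inr m # p),
   X_lambda = Sum_{beta<lambda} X_beta (coded as Inl beta # p).
   An element (r_i) of the product prod_i R_i is the function whose slice at i is r_i. *)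

inductive leaf :: "'o::wellorder \<Rightarrow> ('o + nat) list \<Rightarrow> bool" where
  leaf_zero: "is_zero_ord \<alpha> \<Longrightarrow> leaf \<alpha> []"
| leaf_succ: "is_succ_of \<alpha> \<beta> \<Longrightarrow> leaf \<beta> p \<Longrightarrow> leaf \<alpha> (Inr m # p)"
| leaf_limit: "is_limit_ord \<alpha> \<Longrightarrow> \<beta> < \<alpha> \<Longrightarrow> leaf \<beta> p \<Longrightarrow> leaf \<alpha> (Inl \<beta> # p)"

definition unitB :: "'o::wellorder \<Rightarrow> ('o + nat) list \<Rightarrow> 'k::field" where
  "unitB \<alpha> = (\<lambda>p. if leaf \<alpha> p then 1 else 0)"

inductive inB :: "'o::wellorder \<Rightarrow> (('o + nat) list \<Rightarrow> 'k::field) \<Rightarrow> bool" where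
  inB_zero: "is_zero_ord \<alpha> \<Longrightarrow> (\<forall>p. p \<noteq> [] \<longrightarrow> f p = 0) \<Longrightarrow> inB \<alpha> f"
| inB_succ: "is_succ_of \<alpha> \<beta> \<Longrightarrow> (\<forall>p. \<not> leaf \<alpha> p \<longrightarrow> f p = 0)
     \<Longrightarrow> (\<forall>m. inB \<beta> (\<lambda>p. f (Inr m # p)))
     \<Longrightarrow> (\<exists>c. finite {m::nat. (\<lambda>p. f (Inr m # p)) \<noteq> (\<lambda>p. c * unitB \<beta> p)})
     \<Longrightarrow> inB \<alpha> f"
| inB_limit: "is_limit_ord \<alpha> \<Longrightarrow> (\<forall>p. \<not> leaf \<alpha> p \<longrightarrow> f p = 0)
     \<Longrightarrow> (\<forall>\<beta><\<alpha>. inB \<beta> (\<lambda>p. f (Inl \<beta> # p)))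
     \<Longrightarrow> (\<exists>c. finite {\<beta>. \<beta> < \<alpha> \<and> (\<lambda>p. f (Inl \<beta> # p)) \<noteq> (\<lambda>p. c * unitB \<beta> p)})
     \<Longrightarrow> inB \<alpha> f"

definition Balg :: "'o::wellorder \<Rightarrow> (('o + nat) list \<Rightarrow> 'k::field) ring" where
  "Balg \<alpha> = \<lparr> carrier = {f. inB \<alpha> f},
               monoid.mult = (\<lambda>f g p. f p * g p),
               one = unitB \<alpha>,
               ring.zero = (\<lambda>p. 0),
               add = (\<lambda>f g p. f p + g p) \<rparr>"

definition smultB :: "'k::field \<Rightarrow> ('x \<Rightarrow> 'k) \<Rightarrow> ('x \<Rightarrow> 'k)" where
  "smultB c f = (\<lambda>p. c * f p)"

definition kalg_iso_prod ::
  "(('o + nat) list \<Rightarrow> 'k::field) ring \<Rightarrow> (('o + nat) list \<Rightarrow> 'k) ring \<Rightarrow> (('o + nat) list \<Rightarrow> 'k) ring \<Rightarrow> bool" where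
  "kalg_iso_prod A B C \<longleftrightarrow> (\<exists>h. h \<in> ring_iso A (RDirProd B C) \<and>
      (\<forall>c f. f \<in> carrier A \<longrightarrow> h (smultB c f) = (smultB c (fst (h f)), smultB c (snd (h f)))))"

end

(*
  B_{\<beta>+1} consists of the sequences (x_m) in B_\<beta> that are eventually a constant multiple
  of 1, and B_\<alpha> for limit \<alpha> of the families (x_\<delta>)_{\<delta><\<alpha>} with x_\<delta> \<in> B_\<delta> that are
  cofinitely such multiples. Splitting off x_0 and shifting the remaining entries down gives
  B_{\<beta>+1} \<cong> B_\<beta> \<boxplus> B_{\<beta>+1}, which is (i). Whenever one coordinate algebra B_\<delta> of B_\<alpha>
  satisfies B_\<delta> \<cong> B_\<gamma> \<boxplus> B_\<delta>, applying that isomorphism to this coordinate alone, and the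
  identity to all others, gives B_\<alpha> \<cong> B_\<gamma> \<boxplus> B_\<alpha>. Hence (ii) follows by induction on n
  through coordinate 0 of B_{\<delta>+1}, and (iii) from (i) for the coordinate \<beta>+1 < \<alpha> of B_\<alpha>.
*)

theory Submission
  imports Defs
begin

lemma RDirProd_simps:
  "carrier (RDirProd R S) = carrier R \<times> carrier S"
  "x \<otimes>\<^bsub>RDirProd R S\<^esub> y = (fst x \<otimes>\<^bsub>R\<^esub> fst y, snd x \<otimes>\<^bsub>S\<^esub> snd y)"
  "x \<oplus>\<^bsub>RDirProd R S\<^esub> y = (fst x \<oplus>\<^bsub>R\<^esub> fst y, snd x \<oplus>\<^bsub>S\<^esub> snd y)"
  "\<one>\<^bsub>RDirProd R S\<^esub> = (\<one>\<^bsub>R\<^esub>, \<one>\<^bsub>S\<^esub>)"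
  by (auto simp: RDirProd_def DirProd_def monoid.defs case_prod_beta)

locale kalg_prod_iso =
  fixes A :: "('x \<Rightarrow> 'k::field) ring" and B :: "('y \<Rightarrow> 'k) ring" and C :: "('z \<Rightarrow> 'k) ring"
    and \<phi> :: "('x \<Rightarrow> 'k) \<Rightarrow> ('y \<Rightarrow> 'k) \<times> ('z \<Rightarrow> 'k)" and \<psi>
  assumes \<phi>_carrier: "\<And>f. f \<in> carrier A \<Longrightarrow> \<phi> f \<in> carrier B \<times> carrier C"
    and \<psi>_carrier: "\<And>x. x \<in> carrier B \<times> carrier C \<Longrightarrow> \<psi> x \<in> carrier A"
    and \<phi>_\<psi>: "\<And>x. x \<in> carrier B \<times> carrier C \<Longrightarrow> \<phi> (\<psi> x) = x"
    and \<psi>_\<phi>: "\<And>f. f \<in> carrier A \<Longrightarrow> \<psi> (\<phi> f) = f"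
    and \<phi>_mult: "\<And>f g. f \<in> carrier A \<Longrightarrow> g \<in> carrier A \<Longrightarrow>
      \<phi> (f \<otimes>\<^bsub>A\<^esub> g) = (fst (\<phi> f) \<otimes>\<^bsub>B\<^esub> fst (\<phi> g), snd (\<phi> f) \<otimes>\<^bsub>C\<^esub> snd (\<phi> g))"
    and \<phi>_add: "\<And>f g. f \<in> carrier A \<Longrightarrow> g \<in> carrier A \<Longrightarrow>
      \<phi> (f \<oplus>\<^bsub>A\<^esub> g) = (fst (\<phi> f) \<oplus>\<^bsub>B\<^esub> fst (\<phi> g), snd (\<phi> f) \<oplus>\<^bsub>C\<^esub> snd (\<phi> g))"
    and \<phi>_one: "\<phi> \<one>\<^bsub>A\<^esub> = (\<one>\<^bsub>B\<^esub>, \<one>\<^bsub>C\<^esub>)"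
    and \<phi>_smult: "\<And>c f. f \<in> carrier A \<Longrightarrow>
      \<phi> (smultB c f) = (smultB c (fst (\<phi> f)), smultB c (snd (\<phi> f)))"

lemma kalg_iso_prod_iff: "kalg_iso_prod A B C \<longleftrightarrow> (\<exists>\<phi> \<psi>. kalg_prod_iso A B C \<phi> \<psi>)"
proof
  assume "kalg_iso_prod A B C"
  then obtain \<phi> where iso: "\<phi> \<in> ring_iso A (RDirProd B C)"
    and smult: "\<And>c f. f \<in> carrier A \<Longrightarrow>
      \<phi> (smultB c f) = (smultB c (fst (\<phi> f)), smultB c (snd (\<phi> f)))"
    unfolding kalg_iso_prod_def by blast
  then have hom: "\<phi> \<in> ring_hom A (RDirProd B C)"
    and bij: "bij_betw \<phi> (carrier A) (carrier B \<times> carrier C)"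
    unfolding ring_iso_def RDirProd_simps by auto
  have "kalg_prod_iso A B C \<phi> (inv_into (carrier A) \<phi>)"
  proof
    show "\<And>x. x \<in> carrier B \<times> carrier C \<Longrightarrow> inv_into (carrier A) \<phi> x \<in> carrier A"
      using bij by (metis bij_betw_def inv_into_into)
  qed (use hom bij smult in \<open>auto simp: ring_hom_def RDirProd_simps
      bij_betw_inv_into_left bij_betw_inv_into_right\<close>)
  then show "\<exists>\<phi> \<psi>. kalg_prod_iso A B C \<phi> \<psi>" by blast
next
  assume "\<exists>\<phi> \<psi>. kalg_prod_iso A B C \<phi> \<psi>"
  then obtain \<phi> \<psi> where "kalg_prod_iso A B C \<phi> \<psi>" by blast
  then interpret kalg_prod_iso A B C \<phi> \<psi> .
  have "bij_betw \<phi> (carrier A) (carrier B \<times> carrier C)"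
    by (rule bij_betw_byWitness[where f' = \<psi>])
      (use \<phi>_carrier \<psi>_carrier \<phi>_\<psi> \<psi>_\<phi> in force)+
  then have "\<phi> \<in> ring_iso A (RDirProd B C)"
    unfolding ring_iso_def ring_hom_def RDirProd_simps
    using \<phi>_carrier \<phi>_mult \<phi>_add \<phi>_one by auto
  then show "kalg_iso_prod A B C"
    unfolding kalg_iso_prod_def using \<phi>_smult by blast
qed

lemma succ_unique: "is_succ_of \<alpha> \<beta> \<Longrightarrow> is_succ_of \<alpha> \<beta>' \<Longrightarrow> \<beta> = \<beta>'"
  unfolding is_succ_of_def by (metis linorder_neqE not_le)

lemma zero_not_succ: "is_zero_ord \<alpha> \<Longrightarrow> \<not> is_succ_of \<alpha> \<beta>"
  unfolding is_zero_ord_def is_succ_of_def by auto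

lemma zero_not_limit: "is_zero_ord \<alpha> \<Longrightarrow> \<not> is_limit_ord \<alpha>"
  unfolding is_zero_ord_def is_limit_ord_def by auto

lemma limit_not_succ: "is_limit_ord \<alpha> \<Longrightarrow> \<not> is_succ_of \<alpha> \<beta>"
  unfolding is_limit_ord_def by auto

lemma succ_below_limit:
  assumes "is_limit_ord \<alpha>" and "\<beta> < \<alpha>"
  obtains \<sigma> where "is_succ_of \<sigma> \<beta>" and "\<sigma> < \<alpha>"
proof -
  define \<sigma> where "\<sigma> = (LEAST \<sigma>. \<beta> < \<sigma>)"
  have "is_succ_of \<sigma> \<beta>"
    unfolding is_succ_of_def \<sigma>_def using \<open>\<beta> < \<alpha>\<close> by (auto intro: LeastI Least_le)
  moreover have "\<sigma> \<le> \<alpha>"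
    unfolding \<sigma>_def using \<open>\<beta> < \<alpha>\<close> by (rule Least_le)
  ultimately show thesis
    using that assms limit_not_succ by (metis order.not_eq_order_implies_strict)
qed

lemma leaf_Nil: "leaf \<alpha> [] \<longleftrightarrow> is_zero_ord \<alpha>"
  by (auto elim: leaf.cases intro: leaf.intros)

lemma leaf_succ_Inr: "is_succ_of \<alpha> \<beta> \<Longrightarrow> leaf \<alpha> (Inr m # p) \<longleftrightarrow> leaf \<beta> p"
  by (auto elim: leaf.cases intro: leaf.intros dest: succ_unique)

lemma leaf_limit_Inl: "is_limit_ord \<alpha> \<Longrightarrow> leaf \<alpha> (Inl \<beta> # p) \<longleftrightarrow> \<beta> < \<alpha> \<and> leaf \<beta> p"
  by (auto elim: leaf.cases intro: leaf.intros)

lemma inB_vanishes_off_leaves: "inB \<alpha> f \<Longrightarrow> \<not> leaf \<alpha> p \<Longrightarrow> f p = 0"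
  by (induct rule: inB.induct) (metis leaf_Nil)+

(* Coordinate t of f: t = Inr m in B_{\<beta>+1}, and t = Inl \<delta> in B_\<alpha> for limit \<alpha>. *)
definition branch :: "'a \<Rightarrow> ('a list \<Rightarrow> 'k) \<Rightarrow> 'a list \<Rightarrow> 'k" where
  "branch t f = (\<lambda>p. f (t # p))"

definition graft :: "'a \<Rightarrow> ('a list \<Rightarrow> 'k) \<Rightarrow> ('a list \<Rightarrow> 'k) \<Rightarrow> 'a list \<Rightarrow> 'k" where
  "graft t f x p = (if p \<noteq> [] \<and> hd p = t then x (tl p) else f p)"

lemma graft_simps [simp]:
  "graft t f x [] = f []"
  "graft t f x (s # p) = (if s = t then x p else f (s # p))"
  by (simp_all add: graft_def)

lemma branch_graft [simp]: "branch s (graft t f x) = (if s = t then x else branch s f)"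
  by (simp add: branch_def)

lemma branch_pointwise [simp]:
  "branch t (\<lambda>p. c) = (\<lambda>p. c)"
  "branch t (\<lambda>p. f p * g p) = (\<lambda>p. branch t f p * branch t g p)"
  "branch t (\<lambda>p. f p + g p) = (\<lambda>p. branch t f p + branch t g p)"
  "branch t (\<lambda>p. c * f p) = (\<lambda>p. c * branch t f p)"
  by (simp_all add: branch_def)

lemma graft_pointwise [simp]:
  "graft t (\<lambda>p. c) (\<lambda>p. c) = (\<lambda>p. c)"
  "graft t (\<lambda>p. f p * g p) (\<lambda>p. x p * y p) = (\<lambda>p. graft t f x p * graft t g y p)"
  "graft t (\<lambda>p. f p + g p) (\<lambda>p. x p + y p) = (\<lambda>p. graft t f x p + graft t g y p)"
  "graft t (\<lambda>p. c * f p) (\<lambda>p. c * x p) = (\<lambda>p. c * graft t f x p)"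
  by (simp_all add: graft_def fun_eq_iff)

lemma graft_branch [simp]: "graft t f (branch t f) = f"
proof
  fix p show "graft t f (branch t f) p = f p"
    by (cases p) (simp_all add: branch_def)
qed

lemma graft_graft [simp]: "graft t (graft t f x) y = graft t f y"
proof
  fix p show "graft t (graft t f x) y p = graft t f y p"
    by (cases p) simp_all
qed

lemma inB_succ_iff:
  assumes "is_succ_of \<alpha> \<beta>"
  shows "inB \<alpha> f \<longleftrightarrow> (\<forall>p. \<not> leaf \<alpha> p \<longrightarrow> f p = 0) \<and> (\<forall>m. inB \<beta> (branch (Inr m) f))
    \<and> (\<exists>c. finite {m. branch (Inr m) f \<noteq> smultB c (unitB \<beta>)})"
    (is "_ \<longleftrightarrow> ?rhs")
proof
  assume "inB \<alpha> f"
  then show "?rhs" using assms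
    by cases (auto simp: branch_def smultB_def dest: zero_not_succ limit_not_succ succ_unique)
qed (use assms inB_succ in \<open>auto simp: branch_def smultB_def\<close>)

lemma inB_limit_iff:
  assumes "is_limit_ord \<alpha>"
  shows "inB \<alpha> f \<longleftrightarrow> (\<forall>p. \<not> leaf \<alpha> p \<longrightarrow> f p = 0) \<and> (\<forall>\<beta><\<alpha>. inB \<beta> (branch (Inl \<beta>) f))
    \<and> (\<exists>c. finite {\<beta>. \<beta> < \<alpha> \<and> branch (Inl \<beta>) f \<noteq> smultB c (unitB \<beta>)})"
    (is "_ \<longleftrightarrow> ?rhs")
proof
  assume "inB \<alpha> f"
  then show "?rhs" using assms
    by cases (auto simp: branch_def smultB_def dest: zero_not_limit limit_not_succ)
qed (use assms inB_limit in \<open>auto simp: branch_def smultB_def\<close>)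

lemma branch_inB_succ: "is_succ_of \<alpha> \<beta> \<Longrightarrow> inB \<alpha> f \<Longrightarrow> inB \<beta> (branch (Inr m) f)"
  by (simp add: inB_succ_iff)

lemma branch_inB_limit: "is_limit_ord \<alpha> \<Longrightarrow> \<beta> < \<alpha> \<Longrightarrow> inB \<alpha> f \<Longrightarrow> inB \<beta> (branch (Inl \<beta>) f)"
  by (simp add: inB_limit_iff)

lemma branch_unitB_succ: "is_succ_of \<alpha> \<beta> \<Longrightarrow> branch (Inr m) (unitB \<alpha>) = unitB \<beta>"
  by (simp add: branch_def unitB_def leaf_succ_Inr)

lemma branch_unitB_limit: "is_limit_ord \<alpha> \<Longrightarrow> \<beta> < \<alpha> \<Longrightarrow> branch (Inl \<beta>) (unitB \<alpha>) = unitB \<beta>"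
  by (simp add: branch_def unitB_def leaf_limit_Inl)

lemma graft_inB_succ:
  assumes succ: "is_succ_of \<alpha> \<beta>" and f: "inB \<alpha> f" and x: "inB \<beta> x"
  shows "inB \<alpha> (graft (Inr m) f x)"
proof -
  obtain c where vanish: "\<forall>p. \<not> leaf \<alpha> p \<longrightarrow> f p = 0"
    and branches: "\<forall>m. inB \<beta> (branch (Inr m) f)"
    and fin: "finite {m. branch (Inr m) f \<noteq> smultB c (unitB \<beta>)}"
    using f succ by (auto simp: inB_succ_iff)
  have "{k. branch (Inr k) (graft (Inr m) f x) \<noteq> smultB c (unitB \<beta>)}
      \<subseteq> insert m {k. branch (Inr k) f \<noteq> smultB c (unitB \<beta>)}"
    by auto
  then have "finite {k. branch (Inr k) (graft (Inr m) f x) \<noteq> smultB c (unitB \<beta>)}"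
    using fin by (simp add: finite_subset)
  moreover have "graft (Inr m) f x p = 0" if "\<not> leaf \<alpha> p" for p
    using that vanish inB_vanishes_off_leaves[OF x]
    by (cases p) (auto simp: leaf_succ_Inr[OF succ])
  moreover have "\<forall>k. inB \<beta> (branch (Inr k) (graft (Inr m) f x))"
    using branches x by simp
  ultimately show ?thesis
    unfolding inB_succ_iff[OF succ] by blast
qed

lemma graft_inB_limit:
  assumes lim: "is_limit_ord \<alpha>" and "\<beta> < \<alpha>" and f: "inB \<alpha> f" and x: "inB \<beta> x"
  shows "inB \<alpha> (graft (Inl \<beta>) f x)"
proof -
  obtain c where vanish: "\<forall>p. \<not> leaf \<alpha> p \<longrightarrow> f p = 0"
    and branches: "\<forall>\<delta><\<alpha>. inB \<delta> (branch (Inl \<delta>) f)"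
    and fin: "finite {\<delta>. \<delta> < \<alpha> \<and> branch (Inl \<delta>) f \<noteq> smultB c (unitB \<delta>)}"
    using f lim by (auto simp: inB_limit_iff)
  have "{\<delta>. \<delta> < \<alpha> \<and> branch (Inl \<delta>) (graft (Inl \<beta>) f x) \<noteq> smultB c (unitB \<delta>)}
      \<subseteq> insert \<beta> {\<delta>. \<delta> < \<alpha> \<and> branch (Inl \<delta>) f \<noteq> smultB c (unitB \<delta>)}"
    by auto
  then have "finite {\<delta>. \<delta> < \<alpha> \<and> branch (Inl \<delta>) (graft (Inl \<beta>) f x) \<noteq> smultB c (unitB \<delta>)}"
    using fin by (simp add: finite_subset)
  moreover have "graft (Inl \<beta>) f x p = 0" if "\<not> leaf \<alpha> p" for p
    using that vanish inB_vanishes_off_leaves[OF x] \<open>\<beta> < \<alpha>\<close>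
    by (cases p) (auto simp: leaf_limit_Inl[OF lim])
  moreover have "\<forall>\<delta><\<alpha>. inB \<delta> (branch (Inl \<delta>) (graft (Inl \<beta>) f x))"
    using branches x by simp
  ultimately show ?thesis
    unfolding inB_limit_iff[OF lim] by blast
qed

fun shift_path :: "('a + nat) list \<Rightarrow> ('a + nat) list" where
  "shift_path (Inr m # p) = Inr (Suc m) # p"
| "shift_path p = p"

fun cons_branch :: "(('a + nat) list \<Rightarrow> 'k) \<Rightarrow> (('a + nat) list \<Rightarrow> 'k) \<Rightarrow> ('a + nat) list \<Rightarrow> 'k" where
  "cons_branch x g (Inr 0 # p) = x p"
| "cons_branch x g (Inr (Suc m) # p) = g (Inr m # p)"
| "cons_branch x g p = g p"

lemma branch_shift_path [simp]: "branch (Inr m) (f \<circ> shift_path) = branch (Inr (Suc m)) f"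
  by (simp add: branch_def)

lemma branch_cons_branch [simp]:
  "branch (Inr 0) (cons_branch x g) = x"
  "branch (Inr (Suc m)) (cons_branch x g) = branch (Inr m) g"
  by (simp_all add: branch_def)

lemma cons_branch_shift_path [simp]: "cons_branch x g \<circ> shift_path = g"
proof
  fix p show "(cons_branch x g \<circ> shift_path) p = g p"
    by (induct p rule: shift_path.induct) simp_all
qed

lemma cons_branch_branch_shift_path [simp]: "cons_branch (branch (Inr 0) f) (f \<circ> shift_path) = f"
proof
  fix p show "cons_branch (branch (Inr 0) f) (f \<circ> shift_path) p = f p"
    by (induct "branch (Inr 0) f" "f \<circ> shift_path" p rule: cons_branch.induct)
      (simp_all add: branch_def)
qed

lemma unitB_shift_path:
  "is_succ_of \<alpha> \<beta> \<Longrightarrow> (unitB \<alpha> :: _ \<Rightarrow> 'k::field) \<circ> shift_path = unitB \<alpha>"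
proof
  fix p assume "is_succ_of \<alpha> \<beta>"
  then show "((unitB \<alpha> :: _ \<Rightarrow> 'k) \<circ> shift_path) p = unitB \<alpha> p"
    by (induct p rule: shift_path.induct) (simp_all add: unitB_def leaf_succ_Inr)
qed

lemma comp_shift_path_inB:
  assumes succ: "is_succ_of \<alpha> \<beta>" and f: "inB \<alpha> f"
  shows "inB \<alpha> (f \<circ> shift_path)"
proof -
  obtain c where vanish: "\<forall>p. \<not> leaf \<alpha> p \<longrightarrow> f p = 0"
    and branches: "\<forall>m. inB \<beta> (branch (Inr m) f)"
    and fin: "finite {m. branch (Inr m) f \<noteq> smultB c (unitB \<beta>)}"
    using f succ by (auto simp: inB_succ_iff)
  have "{m. branch (Inr m) (f \<circ> shift_path) \<noteq> smultB c (unitB \<beta>)}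
      = Suc -` {m. branch (Inr m) f \<noteq> smultB c (unitB \<beta>)}"
    by auto
  then have "finite {m. branch (Inr m) (f \<circ> shift_path) \<noteq> smultB c (unitB \<beta>)}"
    using fin by (metis finite_vimageI inj_Suc)
  moreover have "(f \<circ> shift_path) p = 0" if "\<not> leaf \<alpha> p" for p
    using that vanish
    by (induct p rule: shift_path.induct) (simp_all add: leaf_succ_Inr[OF succ])
  ultimately show ?thesis
    using branches by (auto simp: inB_succ_iff[OF succ])
qed

lemma cons_branch_inB:
  assumes succ: "is_succ_of \<alpha> \<beta>" and x: "inB \<beta> x" and g: "inB \<alpha> g"
  shows "inB \<alpha> (cons_branch x g)"
proof -
  obtain c where vanish: "\<forall>p. \<not> leaf \<alpha> p \<longrightarrow> g p = 0"
    and branches: "\<forall>m. inB \<beta> (branch (Inr m) g)"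
    and fin: "finite {m. branch (Inr m) g \<noteq> smultB c (unitB \<beta>)}"
    using g succ by (auto simp: inB_succ_iff)
  have "{m. branch (Inr m) (cons_branch x g) \<noteq> smultB c (unitB \<beta>)}
      \<subseteq> insert 0 (Suc ` {m. branch (Inr m) g \<noteq> smultB c (unitB \<beta>)})"
  proof
    fix m assume "m \<in> {m. branch (Inr m) (cons_branch x g) \<noteq> smultB c (unitB \<beta>)}"
    then show "m \<in> insert 0 (Suc ` {m. branch (Inr m) g \<noteq> smultB c (unitB \<beta>)})"
      by (cases m) auto
  qed
  then have "finite {m. branch (Inr m) (cons_branch x g) \<noteq> smultB c (unitB \<beta>)}"
    using fin by (simp add: finite_subset)
  moreover have "cons_branch x g p = 0" if "\<not> leaf \<alpha> p" for p
    using that vanish inB_vanishes_off_leaves[OF x]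
    by (induct x g p rule: cons_branch.induct) (simp_all add: leaf_succ_Inr[OF succ])
  moreover have "inB \<beta> (branch (Inr m) (cons_branch x g))" for m
    using x branches by (cases m) simp_all
  ultimately show ?thesis
    unfolding inB_succ_iff[OF succ] by blast
qed

lemma Balg_simps:
  "carrier (Balg \<alpha>) = {f. inB \<alpha> f}"
  "f \<otimes>\<^bsub>Balg \<alpha>\<^esub> g = (\<lambda>p. f p * g p)"
  "f \<oplus>\<^bsub>Balg \<alpha>\<^esub> g = (\<lambda>p. f p + g p)"
  "\<one>\<^bsub>Balg \<alpha>\<^esub> = unitB \<alpha>"
  by (simp_all add: Balg_def)

lemma Balg_succ_iso:
  assumes succ: "is_succ_of \<alpha> \<beta>"
  shows "kalg_iso_prod (Balg \<alpha> :: (('o::wellorder + nat) list \<Rightarrow> 'k::field) ring) (Balg \<beta>) (Balg \<alpha>)"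
proof -
  have "kalg_prod_iso (Balg \<alpha>) (Balg \<beta>) (Balg \<alpha>)
      (\<lambda>f :: ('o + nat) list \<Rightarrow> 'k. (branch (Inr 0) f, f \<circ> shift_path)) (case_prod cons_branch)"
    by unfold_locales
      (use succ in \<open>auto simp: Balg_simps branch_inB_succ comp_shift_path_inB cons_branch_inB
        branch_unitB_succ unitB_shift_path smultB_def\<close>)
  then show ?thesis
    unfolding kalg_iso_prod_iff by blast
qed

lemma kalg_iso_prod_graft:
  fixes t :: "'o::wellorder + nat"
  assumes branch_inB: "\<And>f::('o + nat) list \<Rightarrow> 'k::field. inB \<alpha> f \<Longrightarrow> inB \<delta> (branch t f)"
    and graft_inB: "\<And>f x::('o + nat) list \<Rightarrow> 'k. inB \<alpha> f \<Longrightarrow> inB \<delta> x \<Longrightarrow> inB \<alpha> (graft t f x)"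
    and branch_unitB: "branch t (unitB \<alpha>) = (unitB \<delta> :: _ \<Rightarrow> 'k)"
    and iso: "kalg_iso_prod (Balg \<delta> :: (('o + nat) list \<Rightarrow> 'k) ring) (Balg \<gamma>) (Balg \<delta>)"
  shows "kalg_iso_prod (Balg \<alpha> :: (('o + nat) list \<Rightarrow> 'k) ring) (Balg \<gamma>) (Balg \<alpha>)"
proof -
  obtain \<phi> \<psi> where "kalg_prod_iso (Balg \<delta> :: (('o + nat) list \<Rightarrow> 'k) ring) (Balg \<gamma>) (Balg \<delta>) \<phi> \<psi>"
    using iso unfolding kalg_iso_prod_iff by blast
  then interpret \<delta>: kalg_prod_iso "Balg \<delta>" "Balg \<gamma>" "Balg \<delta>" \<phi> \<psi> .
  have \<phi>_inB: "inB \<gamma> (fst (\<phi> x))" "inB \<delta> (snd (\<phi> x))" if "inB \<delta> x" for x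
    using \<delta>.\<phi>_carrier[of x] that by (auto simp: Balg_simps)
  have \<psi>_inB: "inB \<delta> (\<psi> (b, x))" if "inB \<gamma> b" "inB \<delta> x" for b x
    using \<delta>.\<psi>_carrier[of "(b, x)"] that by (auto simp: Balg_simps)
  note \<delta>_simps = \<delta>.\<phi>_\<psi> \<delta>.\<psi>_\<phi> \<delta>.\<phi>_mult[unfolded Balg_simps] \<delta>.\<phi>_add[unfolded Balg_simps]
    \<delta>.\<phi>_one[unfolded Balg_simps] \<delta>.\<phi>_smult[unfolded smultB_def]
  have graft_unitB: "graft t (unitB \<alpha>) (unitB \<delta>) = (unitB \<alpha> :: _ \<Rightarrow> 'k)"
    by (metis branch_unitB graft_branch)
  have "kalg_prod_iso (Balg \<alpha>) (Balg \<gamma>) (Balg \<alpha>)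
      (\<lambda>f. (fst (\<phi> (branch t f)), graft t f (snd (\<phi> (branch t f)))))
      (\<lambda>(b, g). graft t g (\<psi> (b, branch t g)))"
    by unfold_locales
      (auto simp: Balg_simps \<delta>_simps \<phi>_inB \<psi>_inB branch_inB graft_inB branch_unitB graft_unitB smultB_def)
  then show ?thesis
    unfolding kalg_iso_prod_iff by blast
qed

lemma Balg_plus_nat_iso:
  "plus_nat_ord \<gamma> n \<alpha> \<Longrightarrow> 0 < n \<Longrightarrow>
    kalg_iso_prod (Balg \<alpha> :: (('o::wellorder + nat) list \<Rightarrow> 'k::field) ring) (Balg \<gamma>) (Balg \<alpha>)"
proof (induct rule: plus_nat_ord.induct)
  case (2 \<gamma> n \<delta> \<alpha>)
  show ?case
  proof (cases "n = 0")
    case True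
    with 2 have "\<delta> = \<gamma>" by (auto elim: plus_nat_ord.cases)
    with 2 show ?thesis by (simp add: Balg_succ_iso)
  next
    case False
    with 2 have iso: "kalg_iso_prod (Balg \<delta> :: (('o + nat) list \<Rightarrow> 'k) ring) (Balg \<gamma>) (Balg \<delta>)"
      by simp
    show ?thesis
      by (rule kalg_iso_prod_graft[where t = "Inr 0", OF _ _ _ iso])
        (use 2 in \<open>auto intro: branch_inB_succ graft_inB_succ branch_unitB_succ\<close>)
  qed
qed simp

lemma Balg_limit_iso:
  assumes lim: "is_limit_ord \<alpha>" and "\<beta> < \<alpha>"
  shows "kalg_iso_prod (Balg \<alpha> :: (('o::wellorder + nat) list \<Rightarrow> 'k::field) ring) (Balg \<beta>) (Balg \<alpha>)"
proof -
  obtain \<sigma> where succ: "is_succ_of \<sigma> \<beta>" and "\<sigma> < \<alpha>"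
    using assms by (rule succ_below_limit)
  show ?thesis
    by (rule kalg_iso_prod_graft[where t = "Inl \<sigma>", OF _ _ _ Balg_succ_iso[OF succ]])
      (use lim \<open>\<sigma> < \<alpha>\<close> in \<open>auto intro: branch_inB_limit graft_inB_limit branch_unitB_limit\<close>)
qed

theorem lemma6p9:
  fixes \<alpha> \<beta> \<gamma> :: "'o::wellorder" and n :: nat
  shows "(countable_ord \<alpha> \<and> is_succ_of \<alpha> \<beta> \<longrightarrow>
            kalg_iso_prod (Balg \<alpha> :: (('o + nat) list \<Rightarrow> 'k::field) ring) (Balg \<beta>) (Balg \<alpha>))
       \<and> (countable_ord \<alpha> \<and> 0 < n \<and> plus_nat_ord \<gamma> n \<alpha> \<longrightarrow>
            kalg_iso_prod (Balg \<alpha> :: (('o + nat) list \<Rightarrow> 'k::field) ring) (Balg \<gamma>) (Balg \<alpha>))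
       \<and> (countable_ord \<alpha> \<and> is_limit_ord \<alpha> \<and> \<beta> < \<alpha> \<longrightarrow>
            kalg_iso_prod (Balg \<alpha> :: (('o + nat) list \<Rightarrow> 'k::field) ring) (Balg \<beta>) (Balg \<alpha>))"
  using Balg_succ_iso Balg_plus_nat_iso Balg_limit_iso by blast

end
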